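(* Let $(u,v)$ be the solution of (1.1) with initial data satisfying $(H_\infty)$, and for $\epsilon>0$ let $w^\epsilon(t,x)=-\epsilon\log u(t/\epsilon,x/\epsilon)$ on $[0,\infty)\times\mathbb{R}$. Then for each compact set $Q\subset\big((0,\infty)\times\mathbb{R}\big)\cup\big(\{0\}\times(-\infty,0)\big)$ there is a constant $C(Q)>0$, independent of $\epsilon$, such that $0\le w^\epsilon(t,x)\le C(Q)$ for all $(t,x)\in Q$ and all $\epsilon\in(0,1/C(Q)]$.
   Context: System (1.1): $\partial_t u-\partial_{xx}u=u(1-u-av)$, $\partial_t v-d\,\partial_{xx}v=rv(1-bu-v)$ for $(t,x)\in(0,\infty)\times\mathbb{R}$, with $u(0,x)=u_0(x)$, $v(0,x)=v_0(x)$, where $d,r>0$ and $a,b\in(0,1)$ are constants. Hypothesis $(H_\infty)$: $u_0,v_0\in C(\mathbb{R};[0,1])$; there exist constants $\theta_0>0$, $x_0>0$ such that $\theta_0\le u_0(x)\le1$ for $x\le 0$ and $u_0(x)=0$ for $x\ge x_0$; $v_0$ is not identically zero and has compact support. (Here $-\log 0=+\infty$.) *)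

theory Defs
  imports "HOL-Analysis.Analysis" "HOL-Library.Extended_Real"
begin

definition classical_sol ::
  "real \<Rightarrow> (real \<Rightarrow> real \<Rightarrow> real) \<Rightarrow> (real \<Rightarrow> real \<Rightarrow> real) \<Rightarrow> (real \<Rightarrow> real) \<Rightarrow> bool" where
  "classical_sol D F f f0 \<longleftrightarrow>
     continuous_on ({0..} \<times> UNIV) (\<lambda>(t,x). f t x) \<and>
     (\<forall>x. f 0 x = f0 x) \<and>
     (\<exists>ft fx fxx.
        continuous_on ({0<..} \<times> UNIV) (\<lambda>(t,x). ft t x) \<and>
        continuous_on ({0<..} \<times> UNIV) (\<lambda>(t,x). fx t x) \<and>
        continuous_on ({0<..} \<times> UNIV) (\<lambda>(t,x). fxx t x) \<and>
        (\<forall>t>0. \<forall>x.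
           ((\<lambda>s. f s x) has_real_derivative ft t x) (at t) \<and>
           ((\<lambda>y. f t y) has_real_derivative fx t x) (at x) \<and>
           ((\<lambda>y. fx t y) has_real_derivative fxx t x) (at x) \<and>
           ft t x - D * fxx t x = F t x))"

definition solves_LV ::
  "real \<Rightarrow> real \<Rightarrow> real \<Rightarrow> real \<Rightarrow> (real \<Rightarrow> real) \<Rightarrow> (real \<Rightarrow> real) \<Rightarrow>
   (real \<Rightarrow> real \<Rightarrow> real) \<Rightarrow> (real \<Rightarrow> real \<Rightarrow> real) \<Rightarrow> bool" where
  "solves_LV d r a b u0 v0 u v \<longleftrightarrow>
     classical_sol 1 (\<lambda>t x. u t x * (1 - u t x - a * v t x)) u u0 \<and>
     classical_sol d (\<lambda>t x. r * v t x * (1 - b * u t x - v t x)) v v0 \<and>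
     bounded ((\<lambda>(t,x). u t x) ` ({0..} \<times> UNIV)) \<and>
     bounded ((\<lambda>(t,x). v t x) ` ({0..} \<times> UNIV))"

definition H_infty :: "(real \<Rightarrow> real) \<Rightarrow> (real \<Rightarrow> real) \<Rightarrow> bool" where
  "H_infty u0 v0 \<longleftrightarrow>
     continuous_on UNIV u0 \<and> continuous_on UNIV v0 \<and>
     (\<forall>x. 0 \<le> u0 x \<and> u0 x \<le> 1) \<and> (\<forall>x. 0 \<le> v0 x \<and> v0 x \<le> 1) \<and>
     (\<exists>\<theta>0>0. \<exists>x0>0. (\<forall>x\<le>0. \<theta>0 \<le> u0 x \<and> u0 x \<le> 1) \<and> (\<forall>x\<ge>x0. u0 x = 0)) \<and>
     (\<exists>x. v0 x \<noteq> 0) \<and>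
     compact (closure {x. v0 x \<noteq> 0})"

text \<open>w^eps(t,x) = - eps log u(t/eps, x/eps), with the convention -log 0 = +infinity.\<close>
definition w_eps :: "(real \<Rightarrow> real \<Rightarrow> real) \<Rightarrow> real \<Rightarrow> real \<Rightarrow> real \<Rightarrow> ereal" where
  "w_eps u \<epsilon> t x =
     (if u (t/\<epsilon>) (x/\<epsilon>) > 0 then ereal (- \<epsilon> * ln (u (t/\<epsilon>) (x/\<epsilon>))) else \<infinity>)"

end

theory Submission
  imports Defs
begin

text \<open>By the parabolic maximum principle u stays in [0,1] and v stays nonnegative, so the
  absorption term a v is bounded by some K. In a strip moving with speed c,
  \<theta> e^{-|c|/2} e^{-(c^2/4 + \<pi>^2/4 + K) s} e^{-c \<xi>/2} cos(\<pi> \<xi>/2), with \<xi> = y - y0 - c s, is a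
  subsolution for u that vanishes on the sides of the strip; started at y0 \<le> -1, where
  u0 \<ge> \<theta>, it bounds u from below along the whole ray y0 + c s. Reaching the rescaled point
  (t/\<epsilon>, x/\<epsilon>) from y0 = -1 needs the speed c = (x + \<epsilon>)/t, and from y0 = x/\<epsilon> (when x < 0)
  the speed 0; on a compact subset of the domain one of the two speeds is bounded
  independently of \<epsilon>, which yields -\<epsilon> log u(t/\<epsilon>, x/\<epsilon>) \<le> C.\<close>

definition has_parabolic_derivs ::
  "(real \<Rightarrow> real \<Rightarrow> real) \<Rightarrow> (real \<Rightarrow> real \<Rightarrow> real) \<Rightarrow>
   (real \<Rightarrow> real \<Rightarrow> real) \<Rightarrow> (real \<Rightarrow> real \<Rightarrow> real) \<Rightarrow> bool" where
  "has_parabolic_derivs f ft fx fxx \<longleftrightarrow>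
     (\<forall>t>0. \<forall>x. ((\<lambda>s. f s x) has_real_derivative ft t x) (at t) \<and>
                ((\<lambda>y. f t y) has_real_derivative fx t x) (at x) \<and>
                ((\<lambda>y. fx t y) has_real_derivative fxx t x) (at x))"

definition parabolic_interior :: "(real \<times> real) set \<Rightarrow> real \<Rightarrow> real \<Rightarrow> bool" where
  "parabolic_interior K t x \<longleftrightarrow>
     (\<exists>h>0. (\<forall>y. \<bar>y - x\<bar> < h \<longrightarrow> (t,y) \<in> K) \<and> (\<forall>s. t - h < s \<and> s \<le> t \<longrightarrow> (s,x) \<in> K))"

lemma has_parabolic_derivs_affine:
  assumes "has_parabolic_derivs f ft fx fxx"
  shows "has_parabolic_derivs (\<lambda>t x. a * f t x + b)
           (\<lambda>t x. a * ft t x) (\<lambda>t x. a * fx t x) (\<lambda>t x. a * fxx t x)"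
  using assms unfolding has_parabolic_derivs_def by (auto intro!: derivative_eq_intros)

lemma has_parabolic_derivs_diff:
  assumes "has_parabolic_derivs f ft fx fxx" "has_parabolic_derivs g gt gx gxx"
  shows "has_parabolic_derivs (\<lambda>t x. f t x - g t x)
           (\<lambda>t x. ft t x - gt t x) (\<lambda>t x. fx t x - gx t x) (\<lambda>t x. fxx t x - gxx t x)"
  using assms unfolding has_parabolic_derivs_def by (auto intro!: derivative_eq_intros)

lemma travelling_cosine_heat_derivs:
  fixes c k y0 \<mu> :: real
  defines "\<omega> \<equiv> c^2/4 + k^2 + \<mu>"
  defines "\<phi> \<equiv> \<lambda>s y. exp (-\<omega> * s) * exp (-(c/2) * (y - y0 - c * s)) * cos (k * (y - y0 - c * s))"
  obtains \<phi>t \<phi>x \<phi>xx where "has_parabolic_derivs \<phi> \<phi>t \<phi>x \<phi>xx"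
    and "\<And>t x. \<phi>t t x - \<phi>xx t x = - \<mu> * \<phi> t x"
proof
  define E where "E s y = exp (-\<omega> * s) * exp (-(c/2) * (y - y0 - c * s))" for s y
  define \<xi> where "\<xi> s y = k * (y - y0 - c * s)" for s y
  have "((\<lambda>s. \<phi> s y) has_real_derivative
           E t y * ((c^2/2 - \<omega>) * cos (\<xi> t y) + c * k * sin (\<xi> t y))) (at t)"
    and "((\<lambda>y. \<phi> t y) has_real_derivative
           E t y * (-(c/2) * cos (\<xi> t y) - k * sin (\<xi> t y))) (at y)"
    and "((\<lambda>y. E t y * (-(c/2) * cos (\<xi> t y) - k * sin (\<xi> t y))) has_real_derivative
           E t y * ((c^2/4 - k^2) * cos (\<xi> t y) + c * k * sin (\<xi> t y))) (at y)" for t y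
    unfolding \<phi>_def E_def \<xi>_def
    by (rule derivative_eq_intros refl | simp add: algebra_simps power2_eq_square)+
  then show "has_parabolic_derivs \<phi>
          (\<lambda>t y. E t y * ((c^2/2 - \<omega>) * cos (\<xi> t y) + c * k * sin (\<xi> t y)))
          (\<lambda>t y. E t y * (-(c/2) * cos (\<xi> t y) - k * sin (\<xi> t y)))
          (\<lambda>t y. E t y * ((c^2/4 - k^2) * cos (\<xi> t y) + c * k * sin (\<xi> t y)))"
    unfolding has_parabolic_derivs_def by blast
  show "E t y * ((c^2/2 - \<omega>) * cos (\<xi> t y) + c * k * sin (\<xi> t y))
          - E t y * ((c^2/4 - k^2) * cos (\<xi> t y) + c * k * sin (\<xi> t y)) = - \<mu> * \<phi> t y" for t y
    by (simp add: \<phi>_def E_def \<xi>_def \<omega>_def algebra_simps power2_eq_square)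
qed

lemma parabolic_interior_if_open:
  assumes "open U" "(t,x) \<in> U" and sub: "\<And>s y. (s,y) \<in> U \<Longrightarrow> s \<le> t \<Longrightarrow> (s,y) \<in> K"
  shows "parabolic_interior K t x"
proof -
  obtain h where "h > 0" and h: "ball (t,x) h \<subseteq> U"
    using assms(1,2) open_contains_ball by blast
  have "(t,y) \<in> K" if "\<bar>y - x\<bar> < h" for y
  proof -
    have "(t,y) \<in> ball (t,x) h" using that by (simp add: dist_Pair_Pair dist_real_def abs_minus_commute)
    then show ?thesis using h sub[of t y] by auto
  qed
  moreover have "(s,x) \<in> K" if "t - h < s" "s \<le> t" for s
  proof -
    have "(s,x) \<in> ball (t,x) h" using that by (simp add: dist_Pair_Pair dist_real_def)
    then show ?thesis using h sub[of s x] that by auto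
  qed
  ultimately show ?thesis using \<open>h > 0\<close> unfolding parabolic_interior_def by blast
qed

lemma heat_operator_nonneg_at_parabolic_max:
  fixes f :: "real \<Rightarrow> real \<Rightarrow> real" and fx :: "real \<Rightarrow> real"
  assumes "h > 0" "D > 0"
    and max_x: "\<And>y. \<bar>y - x\<bar> < h \<Longrightarrow> f t y \<le> f t x"
    and max_t: "\<And>s. t - h < s \<Longrightarrow> s \<le> t \<Longrightarrow> f s x \<le> f t x"
    and dt: "((\<lambda>s. f s x) has_real_derivative ft) (at t)"
    and dx: "\<And>y. ((\<lambda>y. f t y) has_real_derivative fx y) (at y)"
    and dxx: "(fx has_real_derivative fxx) (at x)"
  shows "ft - D * fxx \<ge> 0"
proof -
  have "ft \<ge> 0"
  proof (rule ccontr)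
    assume "\<not> ft \<ge> 0"
    then obtain e where "e > 0" and dec: "\<And>k. 0 < k \<Longrightarrow> k < e \<Longrightarrow> f t x < f (t - k) x"
      using DERIV_neg_dec_left[OF dt] by (meson not_le)
    define k where "k = min e h / 2"
    have "0 < k" "k < e" "k < h" using \<open>e > 0\<close> \<open>h > 0\<close> by (auto simp: k_def)
    then show False using dec[of k] max_t[of "t - k"] by simp
  qed
  moreover have "fxx \<le> 0"
  proof (rule ccontr)
    assume "\<not> fxx \<le> 0"
    then obtain e where "e > 0" and inc: "\<And>k. 0 < k \<Longrightarrow> k < e \<Longrightarrow> fx x < fx (x + k)"
      using DERIV_pos_inc_right[OF dxx] by (meson not_le)
    have "fx x = 0"
      using DERIV_local_max[OF dx \<open>h > 0\<close>] max_x by (simp add: abs_minus_commute)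
    define k where "k = min e h / 2"
    have k: "0 < k" "k < e" "k < h" using \<open>e > 0\<close> \<open>h > 0\<close> by (auto simp: k_def)
    obtain z where z: "x < z" "z < x + k" and mvt: "f t (x + k) - f t x = k * fx z"
      using MVT2[of x "x + k" "\<lambda>y. f t y" fx] dx k by auto
    have "fx z > 0" using inc[of "z - x"] z k \<open>fx x = 0\<close> by auto
    then have "f t (x + k) > f t x" using mvt k by (simp add: algebra_simps)
    then show False using max_x[of "x + k"] k by simp
  qed
  moreover have "D * fxx \<le> 0" using \<open>D > 0\<close> \<open>fxx \<le> 0\<close> by (simp add: mult_nonneg_nonpos)
  ultimately show ?thesis by simp
qed

lemma parabolic_max_principle_compact:
  fixes f ft fx fxx :: "real \<Rightarrow> real \<Rightarrow> real"
  assumes K: "compact K" and cont: "continuous_on K (\<lambda>(t,x). f t x)" and "D > 0"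
    and derivs: "has_parabolic_derivs f ft fx fxx"
    and pos: "\<And>t x. (t,x) \<in> K \<Longrightarrow> f t x > 0 \<Longrightarrow>
                t > 0 \<and> parabolic_interior K t x \<and> ft t x - D * fxx t x < 0"
    and "(t0,x0) \<in> K"
  shows "f t0 x0 \<le> 0"
proof (rule ccontr)
  assume "\<not> f t0 x0 \<le> 0"
  obtain t x where "(t,x) \<in> K" and max: "\<And>s y. (s,y) \<in> K \<Longrightarrow> f s y \<le> f t x"
    using continuous_attains_sup[OF K _ cont] \<open>(t0,x0) \<in> K\<close> by fastforce
  then have "f t x > 0" using \<open>\<not> f t0 x0 \<le> 0\<close> \<open>(t0,x0) \<in> K\<close> by fastforce
  then obtain h where "t > 0" "h > 0" and neg: "ft t x - D * fxx t x < 0"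
    and nbhd: "\<And>y. \<bar>y - x\<bar> < h \<Longrightarrow> (t,y) \<in> K" "\<And>s. t - h < s \<Longrightarrow> s \<le> t \<Longrightarrow> (s,x) \<in> K"
    using pos[OF \<open>(t,x) \<in> K\<close>] unfolding parabolic_interior_def by blast
  have d: "((\<lambda>s. f s x) has_real_derivative ft t x) (at t)"
    "\<And>y. ((\<lambda>y. f t y) has_real_derivative fx t y) (at y)"
    "((\<lambda>y. fx t y) has_real_derivative fxx t x) (at x)"
    using derivs \<open>t > 0\<close> unfolding has_parabolic_derivs_def by auto
  have "ft t x - D * fxx t x \<ge> 0"
    by (rule heat_operator_nonneg_at_parabolic_max[OF \<open>h > 0\<close> \<open>D > 0\<close>
          max[OF nbhd(1)] max[OF nbhd(2)] d])
  with neg show False by simp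
qed

text \<open>The weight e^{-(C+1)t} makes the heat operator strictly negative at a positive
  maximum, and the caloric paraboloid \<delta>(1 + x^2 + 2Dt) keeps that maximum away from
  spatial infinity when z is merely bounded.\<close>

lemma exp_weighted_parabolic_max_principle:
  fixes z zt zx zxx :: "real \<Rightarrow> real \<Rightarrow> real"
  assumes K: "compact K" "K \<subseteq> {0..} \<times> UNIV" and "D > 0" "\<delta> \<ge> 0"
    and cont: "continuous_on ({0..} \<times> UNIV) (\<lambda>(t,x). z t x)"
    and derivs: "has_parabolic_derivs z zt zx zxx"
    and ineq: "\<And>t x. t > 0 \<Longrightarrow> z t x > 0 \<Longrightarrow> zt t x - D * zxx t x \<le> C * z t x"
    and interior: "\<And>t x. (t,x) \<in> K \<Longrightarrow> exp (-(C+1)*t) * z t x > \<delta> * (1 + x^2 + 2*D*t) \<Longrightarrow>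
                      t > 0 \<and> parabolic_interior K t x"
    and "(t0,x0) \<in> K"
  shows "exp (-(C+1)*t0) * z t0 x0 \<le> \<delta> * (1 + x0^2 + 2*D*t0)"
proof -
  define E where "E t = exp (-(C+1)*t)" for t
  define g where "g t x = E t * z t x - \<delta> * (1 + x^2 + 2*D*t)" for t x
  define gt where "gt t x = -(C+1) * E t * z t x + E t * zt t x - \<delta> * (2*D)" for t x
  define gx where "gx t x = E t * zx t x - \<delta> * (2*x)" for t x
  define gxx where "gxx t x = E t * zxx t x - \<delta> * 2" for t x
  have "has_parabolic_derivs g gt gx gxx"
    using derivs unfolding has_parabolic_derivs_def g_def gt_def gx_def gxx_def E_def
    by (auto intro!: derivative_eq_intros)
  moreover have "continuous_on K (\<lambda>(t,x). g t x)"
  proof -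
    have "continuous_on K (\<lambda>p. E (fst p) * (\<lambda>(t,x). z t x) p - \<delta> * (1 + (snd p)^2 + 2*D*fst p))"
      unfolding E_def by (intro continuous_intros continuous_on_subset[OF cont K(2)])
    then show ?thesis by (simp add: g_def case_prod_beta)
  qed
  moreover have "t > 0 \<and> parabolic_interior K t x \<and> gt t x - D * gxx t x < 0"
    if "(t,x) \<in> K" "g t x > 0" for t x
  proof -
    have "t \<ge> 0" using K(2) that(1) by auto
    then have "\<delta> * (1 + x^2 + 2*D*t) \<ge> 0" using \<open>D > 0\<close> \<open>\<delta> \<ge> 0\<close> by simp
    then have "E t * z t x > 0" using that(2) by (simp add: g_def)
    then have "z t x > 0" by (simp add: E_def zero_less_mult_iff)
    have "t > 0 \<and> parabolic_interior K t x" using interior that by (simp add: g_def E_def)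
    have "gt t x - D * gxx t x = E t * (zt t x - D * zxx t x) - (C+1) * (E t * z t x)"
      by (simp add: gt_def gxx_def algebra_simps)
    also have "\<dots> \<le> E t * (C * z t x) - (C+1) * (E t * z t x)"
      using ineq[of t x] \<open>t > 0 \<and> _\<close> \<open>z t x > 0\<close> by (simp add: E_def)
    also have "\<dots> < 0" using \<open>E t * z t x > 0\<close> by (simp add: algebra_simps)
    finally show ?thesis using \<open>t > 0 \<and> _\<close> by blast
  qed
  ultimately have "g t0 x0 \<le> 0"
    using parabolic_max_principle_compact[OF K(1) _ \<open>D > 0\<close>] \<open>(t0,x0) \<in> K\<close> by blast
  then show ?thesis by (simp add: g_def E_def)
qed

lemma parabolic_max_principle_bounded:
  fixes z zt zx zxx :: "real \<Rightarrow> real \<Rightarrow> real"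
  assumes "D > 0" "C \<ge> 0"
    and cont: "continuous_on ({0..} \<times> UNIV) (\<lambda>(t,x). z t x)"
    and derivs: "has_parabolic_derivs z zt zx zxx"
    and ineq: "\<And>t x. t > 0 \<Longrightarrow> z t x > 0 \<Longrightarrow> zt t x - D * zxx t x \<le> C * z t x"
    and bounded: "\<And>t x. t \<ge> 0 \<Longrightarrow> z t x \<le> M"
    and init: "\<And>x. z 0 x \<le> 0"
    and "t0 \<ge> 0"
  shows "z t0 x0 \<le> 0"
proof -
  define W where "W = 1 + x0^2 + 2*D*t0"
  have W: "W > 0" using \<open>D > 0\<close> \<open>t0 \<ge> 0\<close> by (simp add: W_def add_pos_nonneg)
  have "exp (-(C+1)*t0) * z t0 x0 \<le> 0 + \<epsilon>" if "\<epsilon> > 0" for \<epsilon>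
  proof -
    define \<delta> where "\<delta> = \<epsilon> / W"
    have "\<delta> > 0" using that W by (simp add: \<delta>_def)
    define R where "R = sqrt (\<bar>M\<bar> / \<delta>) + \<bar>x0\<bar> + 1"
    define K where "K = {0..t0} \<times> {-R..R}"
    have "exp (-(C+1)*t0) * z t0 x0 \<le> \<delta> * W"
      unfolding W_def
    proof (rule exp_weighted_parabolic_max_principle[OF _ _ \<open>D > 0\<close> _ cont derivs ineq])
      show "compact K" "K \<subseteq> {0..} \<times> UNIV" by (auto simp: K_def compact_Times)
      have "\<bar>x0\<bar> \<le> R" using \<open>\<delta> > 0\<close> by (simp add: R_def add_increasing)
      then show "(t0, x0) \<in> K" using \<open>t0 \<ge> 0\<close> unfolding K_def by (auto simp: abs_le_iff)
      fix t x
      assume tx: "(t,x) \<in> K" and big: "exp (-(C+1)*t) * z t x > \<delta> * (1 + x^2 + 2*D*t)"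
      have "0 \<le> t" "t \<le> t0" using tx by (auto simp: K_def)
      have "exp (-(C+1)*t) \<le> 1" using \<open>C \<ge> 0\<close> \<open>0 \<le> t\<close> by (simp add: mult_nonpos_nonneg)
      have "\<delta> * (1 + x^2 + 2*D*t) \<ge> \<delta> * x^2"
        using \<open>\<delta> > 0\<close> \<open>D > 0\<close> \<open>0 \<le> t\<close> by (intro mult_left_mono) auto
      then have lt: "\<delta> * x^2 < exp (-(C+1)*t) * z t x" using big by linarith
      moreover have "\<delta> * x^2 \<ge> 0" using \<open>\<delta> > 0\<close> by simp
      ultimately have "z t x > 0" by (smt (verit) exp_gt_zero zero_less_mult_iff)
      have "exp (-(C+1)*t) * z t x \<le> \<bar>M\<bar>"
        using \<open>exp (-(C+1)*t) \<le> 1\<close> \<open>z t x > 0\<close> bounded[OF \<open>0 \<le> t\<close>, of x]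
        by (smt (verit) mult_left_le_one_le exp_ge_zero)
      then have "x^2 < \<bar>M\<bar> / \<delta>"
        using lt \<open>\<delta> > 0\<close> by (simp add: pos_less_divide_eq mult.commute)
      then have "\<bar>x\<bar> < R" unfolding R_def using real_sqrt_less_mono by fastforce
      have "t \<noteq> 0" using init[of x] \<open>z t x > 0\<close> by auto
      then have "t > 0" using \<open>0 \<le> t\<close> by simp
      have "parabolic_interior K t x"
        by (rule parabolic_interior_if_open[where U = "{0<..} \<times> {-R<..<R}"])
           (use \<open>t > 0\<close> \<open>t \<le> t0\<close> \<open>\<bar>x\<bar> < R\<close> in \<open>auto simp: K_def open_Times\<close>)
      with \<open>t > 0\<close> show "t > 0 \<and> parabolic_interior K t x" by simp
    qed (use \<open>\<delta> > 0\<close> in simp)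
    then show ?thesis using W by (simp add: \<delta>_def)
  qed
  then have "exp (-(C+1)*t0) * z t0 x0 \<le> 0" by (rule field_le_epsilon)
  then show ?thesis by (simp add: mult_le_0_iff)
qed

lemma parabolic_max_principle_moving_strip:
  fixes z zt zx zxx :: "real \<Rightarrow> real \<Rightarrow> real"
  assumes "D > 0"
    and cont: "continuous_on ({0..} \<times> UNIV) (\<lambda>(t,x). z t x)"
    and derivs: "has_parabolic_derivs z zt zx zxx"
    and ineq: "\<And>t x. t > 0 \<Longrightarrow> z t x > 0 \<Longrightarrow> zt t x - D * zxx t x \<le> C * z t x"
    and init: "\<And>y. \<bar>y - y0\<bar> \<le> L \<Longrightarrow> z 0 y \<le> 0"
    and sides: "\<And>s. s \<ge> 0 \<Longrightarrow> z s (y0 + c * s - L) \<le> 0" "\<And>s. s \<ge> 0 \<Longrightarrow> z s (y0 + c * s + L) \<le> 0"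
    and "s0 \<ge> 0" "\<bar>y1 - y0 - c * s0\<bar> \<le> L"
  shows "z s0 y1 \<le> 0"
proof -
  define B where "B = \<bar>y0\<bar> + \<bar>c\<bar> * s0 + L"
  define K where "K = ({0..s0} \<times> {-B..B}) \<inter> {p. \<bar>snd p - y0 - c * fst p\<bar> \<le> L}"
  have K_iff: "(s,y) \<in> K \<longleftrightarrow> 0 \<le> s \<and> s \<le> s0 \<and> \<bar>y - y0 - c * s\<bar> \<le> L" for s y
  proof
    assume s: "0 \<le> s \<and> s \<le> s0 \<and> \<bar>y - y0 - c * s\<bar> \<le> L"
    then have "\<bar>c * s\<bar> \<le> \<bar>c\<bar> * s0" by (simp add: abs_mult mult_left_mono)
    then have "\<bar>y\<bar> \<le> B" unfolding B_def using s by linarith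
    then show "(s,y) \<in> K" using s unfolding K_def by (simp add: abs_le_iff)
  qed (auto simp: K_def)
  have "compact K"
    unfolding K_def by (intro compact_Int_closed compact_Times compact_Icc closed_Collect_le continuous_intros)
  have "exp (-(C+1) * s0) * z s0 y1 \<le> 0 * (1 + y1^2 + 2 * D * s0)"
  proof (rule exp_weighted_parabolic_max_principle[OF \<open>compact K\<close> _ \<open>D > 0\<close> _ cont derivs ineq])
    show "K \<subseteq> {0..} \<times> UNIV" by (auto simp: K_def)
    show "(s0, y1) \<in> K" using K_iff assms(8,9) by simp
    fix t x
    assume tx: "(t,x) \<in> K" and "exp (-(C+1)*t) * z t x > 0 * (1 + x^2 + 2*D*t)"
    then have "z t x > 0" by (simp add: zero_less_mult_iff)
    have "0 \<le> t" "t \<le> s0" "\<bar>x - y0 - c*t\<bar> \<le> L" using tx K_iff by auto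
    have "t \<noteq> 0" using init[of x] \<open>z t x > 0\<close> \<open>\<bar>x - y0 - c*t\<bar> \<le> L\<close> by auto
    then have "t > 0" using \<open>0 \<le> t\<close> by simp
    have "x \<noteq> y0 + c*t - L" "x \<noteq> y0 + c*t + L" using sides[OF \<open>0 \<le> t\<close>] \<open>z t x > 0\<close> by auto
    then have "\<bar>x - y0 - c*t\<bar> < L" using \<open>\<bar>x - y0 - c*t\<bar> \<le> L\<close> by (auto simp: abs_if)
    have "parabolic_interior K t x"
    proof (rule parabolic_interior_if_open[where U = "{p. 0 < fst p \<and> \<bar>snd p - y0 - c * fst p\<bar> < L}"])
      show "open {p. 0 < fst p \<and> \<bar>snd p - y0 - c * fst p\<bar> < L}"
        by (intro open_Collect_conj open_Collect_less continuous_intros)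
    qed (use \<open>t > 0\<close> \<open>t \<le> s0\<close> \<open>\<bar>x - y0 - c*t\<bar> < L\<close> K_iff in auto)
    with \<open>t > 0\<close> show "t > 0 \<and> parabolic_interior K t x" by simp
  qed simp
  then show ?thesis by (simp add: mult_le_0_iff)
qed

lemma classical_solE:
  assumes "classical_sol D F f f0"
  obtains ft fx fxx where "continuous_on ({0..} \<times> UNIV) (\<lambda>(t,x). f t x)" "\<And>x. f 0 x = f0 x"
    and "has_parabolic_derivs f ft fx fxx" "\<And>t x. t > 0 \<Longrightarrow> ft t x - D * fxx t x = F t x"
  using assms unfolding classical_sol_def has_parabolic_derivs_def by metis

lemma bounded_on_half_planeE:
  fixes f :: "real \<Rightarrow> real \<Rightarrow> real"
  assumes "bounded ((\<lambda>(t,x). f t x) ` ({0..} \<times> UNIV))"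
  obtains M where "\<And>t x. t \<ge> 0 \<Longrightarrow> \<bar>f t x\<bar> \<le> M"
  using assms unfolding bounded_iff by fastforce

lemma classical_sol_nonneg:
  fixes f g :: "real \<Rightarrow> real \<Rightarrow> real" and f0 :: "real \<Rightarrow> real"
  assumes sol: "classical_sol D (\<lambda>t x. f t x * g t x) f f0" and "D > 0"
    and bounded: "\<And>t x. t \<ge> 0 \<Longrightarrow> \<bar>f t x\<bar> \<le> M"
    and g_le: "\<And>t x. t > 0 \<Longrightarrow> g t x \<le> C"
    and init: "\<And>x. f0 x \<ge> 0" and "t \<ge> 0"
  shows "f t x \<ge> 0"
proof -
  obtain ft fx fxx where cont: "continuous_on ({0..} \<times> UNIV) (\<lambda>(t,x). f t x)"
    and "\<And>x. f 0 x = f0 x" and derivs: "has_parabolic_derivs f ft fx fxx"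
    and pde: "\<And>t x. t > 0 \<Longrightarrow> ft t x - D * fxx t x = f t x * g t x"
    using classical_solE[OF sol] by blast
  have "- 1 * f t x + 0 \<le> 0"
  proof (rule parabolic_max_principle_bounded[OF \<open>D > 0\<close> _ _ has_parabolic_derivs_affine[OF derivs]])
    show "0 \<le> max C 0" by simp
    show "continuous_on ({0..} \<times> UNIV) (\<lambda>(t,x). - 1 * f t x + 0)"
      using continuous_on_minus[OF cont] by (simp add: case_prod_beta)
    show "- 1 * f s y + 0 \<le> M" if "s \<ge> 0" for s y using bounded[OF that, of y] by simp
    show "- 1 * f 0 y + 0 \<le> 0" for y using init[of y] \<open>\<And>x. f 0 x = f0 x\<close> by simp
    show "- 1 * ft s y - D * (- 1 * fxx s y) \<le> max C 0 * (- 1 * f s y + 0)"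
      if "s > 0" "- 1 * f s y + 0 > 0" for s y
      using pde[OF that(1)] g_le[OF that(1), of y] that(2)
      by (simp add: algebra_simps mult_left_mono_neg)
  qed fact
  then show ?thesis by simp
qed

lemma classical_sol_le_one:
  fixes f g :: "real \<Rightarrow> real \<Rightarrow> real" and f0 :: "real \<Rightarrow> real"
  assumes sol: "classical_sol D (\<lambda>t x. f t x * g t x) f f0" and "D > 0"
    and bounded: "\<And>t x. t \<ge> 0 \<Longrightarrow> \<bar>f t x\<bar> \<le> M"
    and g_nonpos: "\<And>t x. t > 0 \<Longrightarrow> f t x > 1 \<Longrightarrow> g t x \<le> 0"
    and init: "\<And>x. f0 x \<le> 1" and "t \<ge> 0"
  shows "f t x \<le> 1"
proof -
  obtain ft fx fxx where cont: "continuous_on ({0..} \<times> UNIV) (\<lambda>(t,x). f t x)"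
    and "\<And>x. f 0 x = f0 x" and derivs: "has_parabolic_derivs f ft fx fxx"
    and pde: "\<And>t x. t > 0 \<Longrightarrow> ft t x - D * fxx t x = f t x * g t x"
    using classical_solE[OF sol] by blast
  have "1 * f t x + - 1 \<le> 0"
  proof (rule parabolic_max_principle_bounded[OF \<open>D > 0\<close> _ _ has_parabolic_derivs_affine[OF derivs]])
    show "continuous_on ({0..} \<times> UNIV) (\<lambda>(t,x). 1 * f t x + - 1)"
      using continuous_on_diff[OF cont continuous_on_const] by (simp add: case_prod_beta)
    show "1 * f s y + - 1 \<le> M" if "s \<ge> 0" for s y using bounded[OF that, of y] by simp
    show "1 * f 0 y + - 1 \<le> 0" for y using init[of y] \<open>\<And>x. f 0 x = f0 x\<close> by simp
    show "1 * ft s y - D * (1 * fxx s y) \<le> 0 * (1 * f s y + - 1)"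
      if "s > 0" "1 * f s y + - 1 > 0" for s y
      using pde[OF that(1)] g_nonpos[OF that(1), of y] that(2)
      by (simp add: mult_nonneg_nonpos)
  qed (simp_all add: \<open>t \<ge> 0\<close>)
  then show ?thesis by simp
qed

lemma classical_sol_lower_bound_moving_frame:
  fixes f g :: "real \<Rightarrow> real \<Rightarrow> real" and f0 :: "real \<Rightarrow> real"
  assumes sol: "classical_sol 1 (\<lambda>t x. f t x * g t x) f f0"
    and nonneg: "\<And>t x. t \<ge> 0 \<Longrightarrow> f t x \<ge> 0"
    and g_ge: "\<And>t x. t > 0 \<Longrightarrow> g t x \<ge> - K" and "K \<ge> 0"
    and init: "\<And>x. x \<le> 0 \<Longrightarrow> \<theta> \<le> f0 x" and "\<theta> \<ge> 0"
    and "y0 \<le> -1" "s \<ge> 0"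
  shows "\<theta> * exp (- \<bar>c\<bar>/2) * exp (- (c^2/4 + pi^2/4 + K) * s) \<le> f s (y0 + c * s)"
proof -
  obtain ft fx fxx where cont: "continuous_on ({0..} \<times> UNIV) (\<lambda>(t,x). f t x)"
    and f0: "\<And>x. f 0 x = f0 x" and derivs: "has_parabolic_derivs f ft fx fxx"
    and pde: "\<And>t x. t > 0 \<Longrightarrow> ft t x - 1 * fxx t x = f t x * g t x"
    using classical_solE[OF sol] by blast
  define \<eta> where "\<eta> = \<theta> * exp (- \<bar>c\<bar>/2)"
  define \<omega> where "\<omega> = c^2/4 + (pi/2)^2 + K"
  define \<phi> where "\<phi> t y = exp (-\<omega> * t) * exp (-(c/2) * (y - y0 - c * t)) * cos (pi/2 * (y - y0 - c * t))"
    for t y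
  obtain \<phi>t \<phi>x \<phi>xx where d\<phi>: "has_parabolic_derivs \<phi> \<phi>t \<phi>x \<phi>xx"
    and heat\<phi>: "\<And>t y. \<phi>t t y - \<phi>xx t y = - K * \<phi> t y"
    using travelling_cosine_heat_derivs[of c "pi/2" K y0] unfolding \<phi>_def[abs_def] \<omega>_def by blast
  have "\<eta> * \<phi> s (y0 + c * s) + 0 - f s (y0 + c * s) \<le> 0"
  proof (rule parabolic_max_principle_moving_strip[where D = 1 and C = 0 and L = 1,
        OF _ _ has_parabolic_derivs_diff[OF has_parabolic_derivs_affine[OF d\<phi>] derivs]])
    show "continuous_on ({0..} \<times> UNIV) (\<lambda>(t,y). \<eta> * \<phi> t y + 0 - f t y)"
    proof -
      have "continuous_on ({0..} \<times> UNIV) (\<lambda>p. \<eta> * \<phi> (fst p) (snd p) + 0 - (\<lambda>(t,x). f t x) p)"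
        unfolding \<phi>_def by (intro continuous_intros cont)
      then show ?thesis by (simp add: case_prod_beta)
    qed
    show "(\<eta> * \<phi>t t y - ft t y) - 1 * (\<eta> * \<phi>xx t y - fxx t y) \<le> 0 * (\<eta> * \<phi> t y + 0 - f t y)"
      if "t > 0" "\<eta> * \<phi> t y + 0 - f t y > 0" for t y
    proof -
      have "f t y * (- K) \<le> f t y * g t y"
        using g_ge[OF that(1), of y] nonneg[of t y] that(1) by (intro mult_left_mono) auto
      then have "- (f t y * g t y) \<le> K * f t y" by (simp add: algebra_simps)
      moreover have "(\<eta> * \<phi>t t y - ft t y) - 1 * (\<eta> * \<phi>xx t y - fxx t y)
                       = - K * (\<eta> * \<phi> t y) - f t y * g t y"
      proof -
        have "\<eta> * (\<phi>t t y - \<phi>xx t y) = \<eta> * (- K * \<phi> t y)" using heat\<phi>[of t y] by simp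
        then show ?thesis using pde[OF that(1), of y] by (simp add: algebra_simps)
      qed
      moreover have "K * f t y \<le> K * (\<eta> * \<phi> t y)"
        using that(2) \<open>K \<ge> 0\<close> by (intro mult_left_mono) auto
      ultimately show ?thesis by linarith
    qed
    show "\<eta> * \<phi> 0 y + 0 - f 0 y \<le> 0" if "\<bar>y - y0\<bar> \<le> 1" for y
    proof -
      have "\<bar>c/2 * (y - y0)\<bar> \<le> \<bar>c\<bar>/2"
        using that by (simp add: abs_mult mult_left_le)
      then have "exp (-(c/2) * (y - y0)) \<le> exp (\<bar>c\<bar>/2)" by simp
      moreover have "\<phi> 0 y \<le> exp (-(c/2) * (y - y0))"
        unfolding \<phi>_def using mult_left_mono[OF cos_le_one, of "exp (-(c/2) * (y - y0))"] by simp
      ultimately have "\<phi> 0 y \<le> exp (\<bar>c\<bar>/2)" by linarith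
      then have "\<eta> * \<phi> 0 y \<le> \<theta>"
        using \<open>\<theta> \<ge> 0\<close> by (simp add: \<eta>_def mult_left_mono exp_minus field_simps)
      moreover have "\<theta> \<le> f 0 y" using init[of y] f0 that \<open>y0 \<le> -1\<close> by simp
      ultimately show ?thesis by simp
    qed
    show "\<eta> * \<phi> t (y0 + c * t - 1) + 0 - f t (y0 + c * t - 1) \<le> 0"
      and "\<eta> * \<phi> t (y0 + c * t + 1) + 0 - f t (y0 + c * t + 1) \<le> 0" if "t \<ge> 0" for t
      using nonneg[OF that] by (simp_all add: \<phi>_def)
  qed (use \<open>s \<ge> 0\<close> in auto)
  then show ?thesis by (simp add: \<phi>_def \<eta>_def \<omega>_def power_divide)
qed

lemma compact_subset_parabolic_domainE:
  assumes "compact Q" "Q \<subseteq> ({0<..} \<times> UNIV) \<union> ({0} \<times> {..<0})"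
  obtains \<delta> B :: real where "\<delta> > 0" "B \<ge> 0"
    and "\<And>t x. (t,x) \<in> Q \<Longrightarrow> 0 \<le> t \<and> t \<le> B \<and> \<bar>x\<bar> \<le> B \<and> (\<delta> \<le> t \<or> x \<le> -\<delta>)"
proof (cases "Q = {}")
  case False
  have "continuous_on Q (\<lambda>q. max (fst q) (- snd q))" by (intro continuous_intros)
  then obtain p where "p \<in> Q" and pmin: "\<And>q. q \<in> Q \<Longrightarrow> max (fst p) (- snd p) \<le> max (fst q) (- snd q)"
    using continuous_attains_inf[OF \<open>compact Q\<close> False] by blast
  define \<delta> where "\<delta> = max (fst p) (- snd p)"
  have "\<delta> > 0" using assms(2) \<open>p \<in> Q\<close> unfolding \<delta>_def by force
  obtain B where B: "\<And>q. q \<in> Q \<Longrightarrow> norm q \<le> B"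
    using compact_imp_bounded[OF \<open>compact Q\<close>] unfolding bounded_iff by blast
  have "\<bar>t\<bar> \<le> B \<and> \<bar>x\<bar> \<le> B" if "(t,x) \<in> Q" for t x
    using B[OF that] norm_fst_le[of t x] norm_snd_le[of x t] by simp
  moreover have "B \<ge> 0" using B[OF \<open>p \<in> Q\<close>] norm_ge_zero order_trans by blast
  moreover have "0 \<le> t \<and> (\<delta> \<le> t \<or> x \<le> -\<delta>)" if "(t,x) \<in> Q" for t x
    using assms(2) pmin[OF that] that unfolding \<delta>_def by (auto simp: max_def split: if_splits)
  ultimately show ?thesis using that \<open>\<delta> > 0\<close> by (meson abs_le_iff)
qed (use that[of 1 0] in simp)

text \<open>The point (t/\<epsilon>, x/\<epsilon>) lies on the ray of speed (x + \<epsilon>)/t from y0 = -1, and on the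
  ray of speed 0 from y0 = x/\<epsilon>; the first is used away from t = 0, the second near it.\<close>

lemma lower_bound_hyperbolic_rescaling:
  fixes u :: "real \<Rightarrow> real \<Rightarrow> real"
  assumes LB: "\<And>c y0 s. y0 \<le> -1 \<Longrightarrow> s \<ge> 0 \<Longrightarrow>
                 \<theta> * exp (- \<bar>c\<bar>/2) * exp (- (c^2/4 + pi^2/4 + K) * s) \<le> u s (y0 + c * s)"
    and "\<theta> \<ge> 0" "\<delta> > 0" "B \<ge> 0"
    and tx: "0 \<le> t" "\<bar>x\<bar> \<le> B" "\<delta> \<le> t \<or> x \<le> -\<delta>"
    and \<epsilon>: "0 < \<epsilon>" "\<epsilon> \<le> 1" "\<epsilon> \<le> \<delta>"
  defines "cb \<equiv> (B + 1) / \<delta>"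
  shows "\<theta> * exp (- cb/2) * exp (- (cb^2/4 + pi^2/4 + K) * (t/\<epsilon>)) \<le> u (t/\<epsilon>) (x/\<epsilon>)"
proof -
  define s where "s = t/\<epsilon>"
  have "s \<ge> 0" using tx \<epsilon> by (simp add: s_def)
  obtain c y0 where "y0 \<le> -1" "\<bar>c\<bar> \<le> cb" and ray: "y0 + c * s = x/\<epsilon>"
  proof (cases "x \<le> -\<delta>")
    case True
    then have "x/\<epsilon> \<le> -1" using \<epsilon> by (simp add: divide_le_eq)
    moreover have "cb \<ge> 0" using \<open>B \<ge> 0\<close> \<open>\<delta> > 0\<close> by (simp add: cb_def)
    ultimately show ?thesis using that[of "x/\<epsilon>" 0] by simp
  next
    case False
    then have "\<delta> \<le> t" using tx by simp
    have "\<bar>x + \<epsilon>\<bar> / t \<le> (B + 1) / \<delta>"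
      using tx \<epsilon> \<open>\<delta> \<le> t\<close> \<open>\<delta> > 0\<close> by (intro frac_le) auto
    moreover have "-1 + (x + \<epsilon>)/t * s = x/\<epsilon>"
      using \<open>\<delta> \<le> t\<close> \<open>\<delta> > 0\<close> \<epsilon> by (simp add: s_def field_simps)
    ultimately show ?thesis using that[of "-1" "(x + \<epsilon>)/t"] tx(1) by (simp add: cb_def)
  qed
  have "c^2 \<le> cb^2" using \<open>\<bar>c\<bar> \<le> cb\<close> by (metis abs_ge_zero power2_abs power_mono)
  then have "exp (- (cb^2/4 + pi^2/4 + K) * s) \<le> exp (- (c^2/4 + pi^2/4 + K) * s)"
    using \<open>s \<ge> 0\<close> by (simp add: mult_right_mono)
  moreover have "exp (- cb/2) \<le> exp (- \<bar>c\<bar>/2)" using \<open>\<bar>c\<bar> \<le> cb\<close> by simp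
  ultimately have "\<theta> * exp (- cb/2) * exp (- (cb^2/4 + pi^2/4 + K) * s)
                     \<le> \<theta> * exp (- \<bar>c\<bar>/2) * exp (- (c^2/4 + pi^2/4 + K) * s)"
    using \<open>\<theta> \<ge> 0\<close> by (intro mult_mono) (auto intro: mult_left_mono)
  also have "\<dots> \<le> u s (x/\<epsilon>)" using LB[where c = c, OF \<open>y0 \<le> -1\<close> \<open>s \<ge> 0\<close>] ray by simp
  finally show ?thesis by (simp add: s_def)
qed

lemma w_eps_bounds:
  assumes "0 < \<epsilon>" "\<eta> > 0"
    and lower: "\<eta> * exp (- \<Lambda> * (t/\<epsilon>)) \<le> u (t/\<epsilon>) (x/\<epsilon>)" and upper: "u (t/\<epsilon>) (x/\<epsilon>) \<le> 1"
  shows "0 \<le> w_eps u \<epsilon> t x \<and> w_eps u \<epsilon> t x \<le> ereal (- \<epsilon> * ln \<eta> + \<Lambda> * t)"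
proof -
  define U where "U = u (t/\<epsilon>) (x/\<epsilon>)"
  have "U > 0" using lower \<open>\<eta> > 0\<close> unfolding U_def by (smt (verit) exp_gt_zero mult_pos_pos)
  have "ln \<eta> - \<Lambda> * (t/\<epsilon>) \<le> ln U"
    using ln_le_cancel_iff[of "\<eta> * exp (- \<Lambda> * (t/\<epsilon>))" U] lower \<open>U > 0\<close> \<open>\<eta> > 0\<close>
    by (simp add: U_def ln_mult)
  then have "\<epsilon> * (ln \<eta> - \<Lambda> * (t/\<epsilon>)) \<le> \<epsilon> * ln U" using \<open>\<epsilon> > 0\<close> by simp
  then have "- \<epsilon> * ln U \<le> - \<epsilon> * ln \<eta> + \<Lambda> * t" using \<open>\<epsilon> > 0\<close> by (simp add: algebra_simps)
  moreover have "0 \<le> - \<epsilon> * ln U"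
    using \<open>\<epsilon> > 0\<close> \<open>U > 0\<close> upper by (simp add: U_def mult_nonneg_nonpos)
  ultimately show ?thesis using \<open>U > 0\<close> by (simp add: w_eps_def U_def)
qed

lemma w_eps_bounded_on_compact:
  fixes u :: "real \<Rightarrow> real \<Rightarrow> real"
  assumes LB: "\<And>c y0 s. y0 \<le> -1 \<Longrightarrow> s \<ge> 0 \<Longrightarrow>
                 \<theta> * exp (- \<bar>c\<bar>/2) * exp (- (c^2/4 + pi^2/4 + K) * s) \<le> u s (y0 + c * s)"
    and "0 < \<theta>" "\<theta> \<le> 1" "K \<ge> 0"
    and le_one: "\<And>t x. t \<ge> 0 \<Longrightarrow> u t x \<le> 1"
    and "compact Q" "Q \<subseteq> ({0<..} \<times> UNIV) \<union> ({0} \<times> {..<0})"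
  shows "\<exists>C>0. \<forall>\<epsilon>. 0 < \<epsilon> \<and> \<epsilon> \<le> 1 / C \<longrightarrow>
           (\<forall>(t,x)\<in>Q. 0 \<le> w_eps u \<epsilon> t x \<and> w_eps u \<epsilon> t x \<le> ereal C)"
proof -
  obtain \<delta> B where "\<delta> > 0" "B \<ge> 0"
    and Q: "\<And>t x. (t,x) \<in> Q \<Longrightarrow> 0 \<le> t \<and> t \<le> B \<and> \<bar>x\<bar> \<le> B \<and> (\<delta> \<le> t \<or> x \<le> -\<delta>)"
    using compact_subset_parabolic_domainE[OF assms(6,7)] by blast
  define cb where "cb = (B + 1) / \<delta>"
  define \<Lambda> where "\<Lambda> = cb^2/4 + pi^2/4 + K"
  define \<eta> where "\<eta> = \<theta> * exp (- cb/2)"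
  define C where "C = 1 + 1/\<delta> - ln \<eta> + \<Lambda> * B"
  have "\<eta> > 0" "\<eta> \<le> 1"
    using \<open>0 < \<theta>\<close> \<open>\<theta> \<le> 1\<close> \<open>B \<ge> 0\<close> \<open>\<delta> > 0\<close> by (auto simp: \<eta>_def cb_def mult_le_one)
  then have "- ln \<eta> \<ge> 0" by simp
  moreover have "\<Lambda> * B \<ge> 0" using \<open>K \<ge> 0\<close> \<open>B \<ge> 0\<close> by (simp add: \<Lambda>_def)
  ultimately have "C \<ge> 1" "C \<ge> 1/\<delta>" using \<open>\<delta> > 0\<close> by (simp_all add: C_def)
  have "0 \<le> w_eps u \<epsilon> t x \<and> w_eps u \<epsilon> t x \<le> ereal C"
    if "(t,x) \<in> Q" "0 < \<epsilon>" "\<epsilon> \<le> 1 / C" for t x \<epsilon>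
  proof -
    have "1 / C \<le> 1" using \<open>C \<ge> 1\<close> by simp
    moreover have "1 / C \<le> \<delta>"
      using \<open>C \<ge> 1/\<delta>\<close> \<open>\<delta> > 0\<close> \<open>C \<ge> 1\<close> by (simp add: divide_le_eq mult.commute)
    ultimately have "\<epsilon> \<le> 1" "\<epsilon> \<le> \<delta>" using that(3) by linarith+
    have "\<eta> * exp (- \<Lambda> * (t/\<epsilon>)) \<le> u (t/\<epsilon>) (x/\<epsilon>)"
      using lower_bound_hyperbolic_rescaling[OF LB, of \<delta> B t x \<epsilon>] Q[OF that(1)] that(2)
        \<open>\<epsilon> \<le> 1\<close> \<open>\<epsilon> \<le> \<delta>\<close> \<open>0 < \<theta>\<close> \<open>\<delta> > 0\<close> \<open>B \<ge> 0\<close>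
      by (simp add: \<eta>_def \<Lambda>_def cb_def)
    moreover have "u (t/\<epsilon>) (x/\<epsilon>) \<le> 1" using le_one Q[OF that(1)] that(2) by simp
    ultimately have w: "0 \<le> w_eps u \<epsilon> t x \<and> w_eps u \<epsilon> t x \<le> ereal (- \<epsilon> * ln \<eta> + \<Lambda> * t)"
      using w_eps_bounds[OF that(2) \<open>\<eta> > 0\<close>] by blast
    have "- \<epsilon> * ln \<eta> \<le> - ln \<eta>"
      using \<open>\<epsilon> \<le> 1\<close> \<open>- ln \<eta> \<ge> 0\<close> mult_right_mono[of \<epsilon> 1 "- ln \<eta>"] by simp
    moreover have "\<Lambda> * t \<le> \<Lambda> * B"
      using Q[OF that(1)] \<open>K \<ge> 0\<close> by (intro mult_left_mono) (auto simp: \<Lambda>_def)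
    moreover have "0 < 1/\<delta>" using \<open>\<delta> > 0\<close> by simp
    ultimately have "- \<epsilon> * ln \<eta> + \<Lambda> * t \<le> C" unfolding C_def by linarith
    with w show ?thesis by (meson ereal_less_eq(3) order_trans)
  qed
  moreover have "C > 0" using \<open>C \<ge> 1\<close> by simp
  ultimately show ?thesis by blast
qed

lemma solves_LVE:
  assumes "solves_LV d r a b u0 v0 u v"
  obtains Mu Mv where "classical_sol 1 (\<lambda>t x. u t x * (1 - u t x - a * v t x)) u u0"
    and "classical_sol d (\<lambda>t x. v t x * (r * (1 - b * u t x - v t x))) v v0"
    and "\<And>t x. t \<ge> 0 \<Longrightarrow> \<bar>u t x\<bar> \<le> Mu" "\<And>t x. t \<ge> 0 \<Longrightarrow> \<bar>v t x\<bar> \<le> Mv"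
proof -
  have cu: "classical_sol 1 (\<lambda>t x. u t x * (1 - u t x - a * v t x)) u u0"
    and cv: "classical_sol d (\<lambda>t x. r * v t x * (1 - b * u t x - v t x)) v v0"
    and bu: "bounded ((\<lambda>(t,x). u t x) ` ({0..} \<times> UNIV))"
    and bv: "bounded ((\<lambda>(t,x). v t x) ` ({0..} \<times> UNIV))"
    using assms unfolding solves_LV_def by auto
  obtain Mu where Mu: "\<And>t x. t \<ge> 0 \<Longrightarrow> \<bar>u t x\<bar> \<le> Mu"
    using bounded_on_half_planeE[OF bu] by blast
  obtain Mv where Mv: "\<And>t x. t \<ge> 0 \<Longrightarrow> \<bar>v t x\<bar> \<le> Mv"
    using bounded_on_half_planeE[OF bv] by blast
  have "classical_sol d (\<lambda>t x. v t x * (r * (1 - b * u t x - v t x))) v v0"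
    using cv by (simp add: ac_simps)
  from that[OF cu this Mu Mv] show ?thesis .
qed

lemma solves_LV_invariant_region:
  assumes "d > 0" "r > 0" "a \<ge> 0" "b \<ge> 0" and sol: "solves_LV d r a b u0 v0 u v"
    and u0: "\<And>x. 0 \<le> u0 x \<and> u0 x \<le> 1" and v0: "\<And>x. 0 \<le> v0 x" and "t \<ge> 0"
  shows "0 \<le> u t x \<and> u t x \<le> 1 \<and> 0 \<le> v t x"
proof -
  obtain Mu Mv where cu: "classical_sol 1 (\<lambda>t x. u t x * (1 - u t x - a * v t x)) u u0"
    and cv: "classical_sol d (\<lambda>t x. v t x * (r * (1 - b * u t x - v t x))) v v0"
    and Mu: "\<And>t x. t \<ge> 0 \<Longrightarrow> \<bar>u t x\<bar> \<le> Mu" and Mv: "\<And>t x. t \<ge> 0 \<Longrightarrow> \<bar>v t x\<bar> \<le> Mv"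
    using solves_LVE[OF sol] by blast
  have v_nonneg: "0 \<le> v t x" if "t \<ge> 0" for t x
  proof (rule classical_sol_nonneg[OF cv \<open>d > 0\<close> Mv _ v0 that])
    show "r * (1 - b * u s y - v s y) \<le> r * (1 + b * Mu + Mv)" if "s > 0" for s y
    proof -
      have "b * (- Mu) \<le> b * u s y"
        using Mu[of s y] that \<open>b \<ge> 0\<close> by (intro mult_left_mono) (auto simp: abs_le_iff)
      then show ?thesis using Mv[of s y] that \<open>r > 0\<close> by (intro mult_left_mono) (auto simp: abs_le_iff)
    qed
  qed
  have "0 \<le> u t x"
  proof (rule classical_sol_nonneg[OF cu _ Mu _ _ \<open>t \<ge> 0\<close>])
    show "1 - u s y - a * v s y \<le> 1 + Mu" if "s > 0" for s y
      using v_nonneg[of s y] Mu[of s y] that mult_nonneg_nonneg[OF \<open>a \<ge> 0\<close>, of "v s y"]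
      by (auto simp: abs_le_iff)
  qed (use u0 in auto)
  moreover have "u t x \<le> 1"
  proof (rule classical_sol_le_one[OF cu _ Mu _ _ \<open>t \<ge> 0\<close>])
    show "1 - u s y - a * v s y \<le> 0" if "s > 0" "u s y > 1" for s y
      using v_nonneg[of s y] that \<open>a \<ge> 0\<close> by (smt (verit) mult_nonneg_nonneg)
  qed (use u0 in auto)
  ultimately show ?thesis using v_nonneg[OF \<open>t \<ge> 0\<close>] by simp
qed

lemma solves_LV_lower_bound_moving_frame:
  assumes "d > 0" "r > 0" "a \<ge> 0" "b \<ge> 0" and sol: "solves_LV d r a b u0 v0 u v"
    and u0: "\<And>x. 0 \<le> u0 x \<and> u0 x \<le> 1" and v0: "\<And>x. 0 \<le> v0 x"
    and \<theta>: "\<And>x. x \<le> 0 \<Longrightarrow> \<theta> \<le> u0 x" "\<theta> \<ge> 0"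
  obtains K where "K \<ge> 0"
    and "\<And>c y0 s. y0 \<le> -1 \<Longrightarrow> s \<ge> 0 \<Longrightarrow>
           \<theta> * exp (- \<bar>c\<bar>/2) * exp (- (c^2/4 + pi^2/4 + K) * s) \<le> u s (y0 + c * s)"
proof -
  obtain Mu Mv where cu: "classical_sol 1 (\<lambda>t x. u t x * (1 - u t x - a * v t x)) u u0"
    and "classical_sol d (\<lambda>t x. v t x * (r * (1 - b * u t x - v t x))) v v0"
    and "\<And>t x. t \<ge> 0 \<Longrightarrow> \<bar>u t x\<bar> \<le> Mu" and Mv: "\<And>t x. t \<ge> 0 \<Longrightarrow> \<bar>v t x\<bar> \<le> Mv"
    using solves_LVE[OF sol] by blast
  have region: "0 \<le> u t x \<and> u t x \<le> 1" if "t \<ge> 0" for t x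
    using solves_LV_invariant_region[OF assms(1-5) u0 v0 that] by simp
  have "a * Mv \<ge> 0" using Mv[of 0 0] \<open>a \<ge> 0\<close> by simp
  have g_ge: "1 - u t x - a * v t x \<ge> - (a * Mv)" if "t > 0" for t x
  proof -
    have "a * v t x \<le> a * Mv"
      using Mv[of t x] that \<open>a \<ge> 0\<close> by (intro mult_left_mono) (auto simp: abs_le_iff)
    then show ?thesis using region[of t x] that by simp
  qed
  show ?thesis
  proof (rule that[OF \<open>a * Mv \<ge> 0\<close>])
    fix c y0 s :: real assume "y0 \<le> -1" "s \<ge> 0"
    show "\<theta> * exp (- \<bar>c\<bar>/2) * exp (- (c^2/4 + pi^2/4 + a * Mv) * s) \<le> u s (y0 + c * s)"
      by (rule classical_sol_lower_bound_moving_frame[OF cu _ g_ge \<open>a * Mv \<ge> 0\<close> \<theta>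
            \<open>y0 \<le> -1\<close> \<open>s \<ge> 0\<close>]) (use region in blast)
  qed
qed

theorem lemma3p2:
  fixes d r a b :: real and u0 v0 :: "real \<Rightarrow> real" and u v :: "real \<Rightarrow> real \<Rightarrow> real"
    and Q :: "(real \<times> real) set"
  assumes "d > 0" "r > 0" "0 < a" "a < 1" "0 < b" "b < 1"
    and "H_infty u0 v0"
    and "solves_LV d r a b u0 v0 u v"
    and "compact Q"
    and "Q \<subseteq> ({0<..} \<times> UNIV) \<union> ({0} \<times> {..<0})"
  shows "\<exists>C>0. \<forall>\<epsilon>. 0 < \<epsilon> \<and> \<epsilon> \<le> 1 / C \<longrightarrow>
           (\<forall>(t,x)\<in>Q. 0 \<le> w_eps u \<epsilon> t x \<and> w_eps u \<epsilon> t x \<le> ereal C)"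
proof -
  obtain \<theta> where "0 < \<theta>" and \<theta>: "\<And>x. x \<le> 0 \<Longrightarrow> \<theta> \<le> u0 x"
    and u0: "\<And>x. 0 \<le> u0 x \<and> u0 x \<le> 1" and v0: "\<And>x. 0 \<le> v0 x"
    using \<open>H_infty u0 v0\<close> unfolding H_infty_def by blast
  have "\<theta> \<le> 1" using \<theta>[of 0] u0[of 0] by simp
  have LV: "d > 0" "r > 0" "a \<ge> 0" "b \<ge> 0" "solves_LV d r a b u0 v0 u v"
    using assms by auto
  obtain K where "K \<ge> 0" and lower:
    "\<And>c y0 s. y0 \<le> -1 \<Longrightarrow> s \<ge> 0 \<Longrightarrow>
       \<theta> * exp (- \<bar>c\<bar>/2) * exp (- (c^2/4 + pi^2/4 + K) * s) \<le> u s (y0 + c * s)"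
    using solves_LV_lower_bound_moving_frame[OF LV u0 v0 \<theta>] \<open>0 < \<theta>\<close> by auto
  have le_one: "u t x \<le> 1" if "t \<ge> 0" for t x
    using solves_LV_invariant_region[OF LV u0 v0 that] by simp
  show ?thesis
    by (rule w_eps_bounded_on_compact[OF lower \<open>0 < \<theta>\<close> \<open>\<theta> \<le> 1\<close> \<open>K \<ge> 0\<close> le_one assms(9,10)])
qed

end
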